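(* Fix integers $h\ge0$, $n\ge1$, a multi-index $\gamma\in\mathbb{Z}_{\ge0}^n$, and set $k=|\gamma|$. Then for each of the $k^h$ functions $\pi:[h]\to[k]$ and each $r\in[k]$ there exist integers $h'_{\pi,r}\in\{0,1,\dots,h\}$, $t'_{\pi,r}\ge0$ and $j'_{\pi,r}\in[n]$ (depending only on $h,\gamma,\pi,r$) such that for every sequence $L^{(1)},\dots,L^{(T)}\in\mathbb{R}^n$ and every $t\in[T-h]$, $$(D_h(L^\gamma))^{(t)}=\sum_{\pi:[h]\to[k]}\prod_{r=1}^k\big(D_{h'_{\pi,r}}(L(j'_{\pi,r}))\big)^{(t+t'_{\pi,r})}.$$ Moreover: (1) for each $\pi$ and $r$, $h'_{\pi,r}=|\{q\in[h]:\pi(q)=r\}|$, so $\sum_{r=1}^kh'_{\pi,r}=h$; (2) for each $\pi,r$, $0\le t'_{\pi,r}+h'_{\pi,r}\le h$; (3) for each $\pi$ and each $j\in[n]$, $\gamma_j=|\{r\in[k]:j'_{\pi,r}=j\}|$.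
   Context: $L^\gamma$ denotes the scalar sequence $(L^\gamma)^{(t)}=\prod_{j=1}^n(L^{(t)}(j))^{\gamma_j}$, and $L(j)$ the scalar sequence $(L^{(t)}(j))_t$ of $j$-th coordinates. Finite differences: $(D_0L)^{(t)}=L^{(t)}$ and $(D_hL)^{(t)}=(D_{h-1}L)^{(t+1)}-(D_{h-1}L)^{(t)}$. An empty sum is $0$ and an empty product is $1$. *)

theory Defs
  imports "HOL-Library.FuncSet" Complex_Main
begin

fun D :: "nat \<Rightarrow> (nat \<Rightarrow> real) \<Rightarrow> nat \<Rightarrow> real" where
  "D 0 f t = f t"
| "D (Suc h) f t = D h f (Suc t) - D h f t"

text \<open>A vector sequence L is represented as L t j = j-th coordinate of L at time t
  (coordinates j in {1..n}). Lpow n gamma L is the scalar sequence L^gamma.\<close>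
definition Lpow :: "nat \<Rightarrow> (nat \<Rightarrow> nat) \<Rightarrow> (nat \<Rightarrow> nat \<Rightarrow> real) \<Rightarrow> nat \<Rightarrow> real" where
  "Lpow n \<gamma> L t = (\<Prod>j\<in>{1..n}. (L t j) ^ \<gamma> j)"

definition coord :: "(nat \<Rightarrow> nat \<Rightarrow> real) \<Rightarrow> nat \<Rightarrow> nat \<Rightarrow> real" where
  "coord L j = (\<lambda>t. L t j)"

end

theory Submission
  imports Defs
begin

text \<open>One step of the difference operator applied to a product of \<open>k\<close> sequences telescopes into
  \<open>k\<close> products in which exactly one factor \<open>s\<close> is differenced, the factors \<open>r < s\<close> stay at time
  \<open>t\<close> and the factors \<open>r > s\<close> move to time \<open>t + 1\<close>. Iterating \<open>h\<close> times, the terms are indexed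
  by the maps \<open>\<pi> : [h] \<rightarrow> [k]\<close> recording which factor is differenced in each step: factor \<open>r\<close>
  is differenced \<open>|\<pi>\<^sup>-\<^sup>1(r)|\<close> times and shifted once for every step that differences a factor
  \<open>s < r\<close>. Finally \<open>L\<^sup>\<gamma>\<close> is a product of \<open>k = |\<gamma>|\<close> coordinate sequences, coordinate \<open>j\<close>
  being listed \<open>\<gamma>\<^sub>j\<close> times.\<close>

lemma prod_diff_telescope:
  fixes a b :: "nat \<Rightarrow> 'a::comm_ring_1"
  shows "(\<Prod>r\<in>{1..k}. b r) - (\<Prod>r\<in>{1..k}. a r) =
    (\<Sum>s\<in>{1..k}. \<Prod>r\<in>{1..k}. if r < s then a r else if r = s then b r - a r else b r)"
proof (induction k)
  case 0
  then show ?case by simp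
next
  case (Suc k)
  have ins: "{1..Suc k} = insert (Suc k) {1..k}" by auto
  have last_term: "(\<Prod>r\<in>{1..Suc k}. if r < Suc k then a r else if r = Suc k then b r - a r else b r)
     = (b (Suc k) - a (Suc k)) * (\<Prod>r\<in>{1..k}. a r)"
    unfolding ins by simp
  have earlier_term: "(\<Prod>r\<in>{1..Suc k}. if r < s then a r else if r = s then b r - a r else b r)
     = b (Suc k) * (\<Prod>r\<in>{1..k}. if r < s then a r else if r = s then b r - a r else b r)"
    if "s \<in> {1..k}" for s
    unfolding ins using that by simp
  have "(\<Sum>s\<in>{1..Suc k}. \<Prod>r\<in>{1..Suc k}. if r < s then a r else if r = s then b r - a r else b r)
     = (b (Suc k) - a (Suc k)) * (\<Prod>r\<in>{1..k}. a r)
       + b (Suc k) * ((\<Prod>r\<in>{1..k}. b r) - (\<Prod>r\<in>{1..k}. a r))"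
    using last_term earlier_term Suc.IH by (simp add: ins sum_distrib_left mult.commute)
  also have "\<dots> = (\<Prod>r\<in>{1..Suc k}. b r) - (\<Prod>r\<in>{1..Suc k}. a r)"
    unfolding ins by (simp add: algebra_simps)
  finally show ?case by (rule sym)
qed

lemma sum_PiE_insert:
  assumes "a \<notin> I"
  shows "(\<Sum>\<pi>\<in>Pi\<^sub>E (insert a I) B. f \<pi>) = (\<Sum>(s, \<pi>)\<in>B a \<times> Pi\<^sub>E I B. f (\<pi>(a := s)))"
  unfolding PiE_insert_eq sum.reindex[OF inj_combinator[OF assms]] by (simp add: case_prod_unfold)

lemma card_Collect_fun_upd_Suc:
  "card {q\<in>{1..Suc h}. P ((\<pi>(Suc h := s)) q)} = card {q\<in>{1..h}. P (\<pi> q)} + (if P s then 1 else 0)"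
proof -
  have "{q\<in>{1..Suc h}. P ((\<pi>(Suc h := s)) q)} =
      (if P s then insert (Suc h) {q\<in>{1..h}. P (\<pi> q)} else {q\<in>{1..h}. P (\<pi> q)})"
    by auto
  then show ?thesis by simp
qed

definition diff_count :: "(nat \<Rightarrow> nat) \<Rightarrow> nat \<Rightarrow> nat \<Rightarrow> nat" where
  "diff_count \<pi> h r = card {q\<in>{1..h}. \<pi> q = r}"

definition shift_count :: "(nat \<Rightarrow> nat) \<Rightarrow> nat \<Rightarrow> nat \<Rightarrow> nat" where
  "shift_count \<pi> h r = card {q\<in>{1..h}. \<pi> q < r}"

lemma diff_count_fun_upd_Suc:
  "diff_count (\<pi>(Suc h := s)) (Suc h) r = (if s = r then Suc (diff_count \<pi> h r) else diff_count \<pi> h r)"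
  using card_Collect_fun_upd_Suc[where P="\<lambda>x. x = r"]
  by (simp add: diff_count_def del: fun_upd_apply)

lemma shift_count_fun_upd_Suc:
  "shift_count (\<pi>(Suc h := s)) (Suc h) r = (if s < r then Suc (shift_count \<pi> h r) else shift_count \<pi> h r)"
  using card_Collect_fun_upd_Suc[where P="\<lambda>x. x < r"]
  by (simp add: shift_count_def del: fun_upd_apply)

lemma sum_diff_count:
  assumes "\<pi> \<in> {1..h} \<rightarrow>\<^sub>E {1..k}"
  shows "(\<Sum>r\<in>{1..k}. diff_count \<pi> h r) = h"
proof -
  have "(\<Sum>r\<in>{1..k}. \<Sum>q\<in>{q. q \<in> {1..h} \<and> \<pi> q = r}. 1) = (\<Sum>q\<in>{1..h}. 1::nat)"
    by (rule sum.group) (use assms in auto)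
  then show ?thesis by (simp add: diff_count_def)
qed

lemma shift_count_add_diff_count_le: "shift_count \<pi> h r + diff_count \<pi> h r \<le> h"
proof -
  have "shift_count \<pi> h r + diff_count \<pi> h r = card ({q\<in>{1..h}. \<pi> q < r} \<union> {q\<in>{1..h}. \<pi> q = r})"
    unfolding shift_count_def diff_count_def by (rule card_Un_disjoint[symmetric]) auto
  also have "\<dots> \<le> card {1..h}" by (rule card_mono) auto
  finally show ?thesis by simp
qed

lemma D_telescope_factor:
  "(if r < s then D (diff_count \<pi> h r) g (t + shift_count \<pi> h r)
    else if r = s then D (diff_count \<pi> h r) g (Suc t + shift_count \<pi> h r) - D (diff_count \<pi> h r) g (t + shift_count \<pi> h r)
    else D (diff_count \<pi> h r) g (Suc t + shift_count \<pi> h r))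
   = D (diff_count (\<pi>(Suc h := s)) (Suc h) r) g (t + shift_count (\<pi>(Suc h := s)) (Suc h) r)"
  unfolding diff_count_fun_upd_Suc shift_count_fun_upd_Suc by auto

lemma D_prod:
  "D h (\<lambda>t. \<Prod>r\<in>{1..k}. g r t) t =
   (\<Sum>\<pi>\<in>{1..h} \<rightarrow>\<^sub>E {1..k}. \<Prod>r\<in>{1..k}. D (diff_count \<pi> h r) (g r) (t + shift_count \<pi> h r))"
proof (induction h arbitrary: t)
  case 0
  show ?case by (simp add: diff_count_def shift_count_def)
next
  case (Suc h)
  define A where "A \<pi> r x = D (diff_count \<pi> h r) (g r) (x + shift_count \<pi> h r)" for \<pi> r x
  have "D (Suc h) (\<lambda>t. \<Prod>r\<in>{1..k}. g r t) t =
     (\<Sum>\<pi>\<in>{1..h} \<rightarrow>\<^sub>E {1..k}. (\<Prod>r\<in>{1..k}. A \<pi> r (Suc t)) - (\<Prod>r\<in>{1..k}. A \<pi> r t))"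
    unfolding D.simps Suc.IH A_def by (simp add: sum_subtractf)
  also have "\<dots> = (\<Sum>\<pi>\<in>{1..h} \<rightarrow>\<^sub>E {1..k}. \<Sum>s\<in>{1..k}. \<Prod>r\<in>{1..k}.
       if r < s then A \<pi> r t else if r = s then A \<pi> r (Suc t) - A \<pi> r t else A \<pi> r (Suc t))"
    by (simp only: prod_diff_telescope)
  also have "\<dots> = (\<Sum>s\<in>{1..k}. \<Sum>\<pi>\<in>{1..h} \<rightarrow>\<^sub>E {1..k}. \<Prod>r\<in>{1..k}.
       D (diff_count (\<pi>(Suc h := s)) (Suc h) r) (g r) (t + shift_count (\<pi>(Suc h := s)) (Suc h) r))"
    by (subst sum.swap) (unfold A_def D_telescope_factor, rule refl)
  also have "\<dots> = (\<Sum>\<pi>\<in>{1..Suc h} \<rightarrow>\<^sub>E {1..k}.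
       \<Prod>r\<in>{1..k}. D (diff_count \<pi> (Suc h) r) (g r) (t + shift_count \<pi> (Suc h) r))"
  proof -
    have "{1..Suc h} = insert (Suc h) {1..h}" by auto
    then show ?thesis by (simp add: sum_PiE_insert sum.cartesian_product)
  qed
  finally show ?case .
qed

lemma ex_map_with_fibre_cards:
  fixes n :: nat and \<gamma> :: "nat \<Rightarrow> nat"
  shows "\<exists>\<rho>. \<rho> ` {1..(\<Sum>j\<in>{1..n}. \<gamma> j)} \<subseteq> {1..n} \<and>
    (\<forall>j\<in>{1..n}. card {r\<in>{1..(\<Sum>j\<in>{1..n}. \<gamma> j)}. \<rho> r = j} = \<gamma> j)"
proof (induction n)
  case 0
  show ?case by simp
next
  case (Suc n)
  define S where "S = (\<Sum>j\<in>{1..n}. \<gamma> j)"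
  from Suc.IH obtain \<rho> where \<rho>_range: "\<rho> ` {1..S} \<subseteq> {1..n}"
    and \<rho>_fibres: "\<forall>j\<in>{1..n}. card {r\<in>{1..S}. \<rho> r = j} = \<gamma> j"
    unfolding S_def by blast
  define \<rho>' where "\<rho>' r = (if r \<le> S then \<rho> r else Suc n)" for r
  have "{r \<in> {1..S + \<gamma> (Suc n)}. \<rho>' r = j} =
      (if j = Suc n then {S + 1..S + \<gamma> (Suc n)} else {r\<in>{1..S}. \<rho> r = j})" if "j \<in> {1..Suc n}" for j
    using \<rho>_range that by (force simp: \<rho>'_def)
  then have "\<forall>j\<in>{1..Suc n}. card {r \<in> {1..S + \<gamma> (Suc n)}. \<rho>' r = j} = \<gamma> j"
    using \<rho>_fibres by simp
  moreover have "\<rho>' ` {1..S + \<gamma> (Suc n)} \<subseteq> {1..Suc n}"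
    using \<rho>_range by (force simp: \<rho>'_def)
  ultimately show ?case by (auto simp: S_def)
qed

lemma prod_by_fibre_cards:
  fixes c :: "'b \<Rightarrow> 'c::comm_monoid_mult"
  assumes "finite A" "finite B" "\<rho> ` A \<subseteq> B" "\<forall>j\<in>B. card {r\<in>A. \<rho> r = j} = \<gamma> j"
  shows "(\<Prod>r\<in>A. c (\<rho> r)) = (\<Prod>j\<in>B. c j ^ \<gamma> j)"
proof -
  have "(\<Prod>r\<in>A. c (\<rho> r)) = (\<Prod>j\<in>B. \<Prod>r\<in>{r. r \<in> A \<and> \<rho> r = j}. c (\<rho> r))"
    using assms(1-3) by (rule prod.group[symmetric])
  also have "\<dots> = (\<Prod>j\<in>B. c j ^ \<gamma> j)"
    using assms(4) by (intro prod.cong) simp_all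
  finally show ?thesis .
qed

theorem lemma4p5:
  fixes h n :: nat and \<gamma> :: "nat \<Rightarrow> nat"
  assumes "n \<ge> 1"
  shows "\<exists>h' t' j' :: (nat \<Rightarrow> nat) \<Rightarrow> nat \<Rightarrow> nat.
     (\<forall>\<pi>\<in>{1..h} \<rightarrow>\<^sub>E {1..(\<Sum>j\<in>{1..n}. \<gamma> j)}. \<forall>r\<in>{1..(\<Sum>j\<in>{1..n}. \<gamma> j)}.
        h' \<pi> r \<le> h \<and> j' \<pi> r \<in> {1..n}) \<and>
     (\<forall>(L :: nat \<Rightarrow> nat \<Rightarrow> real) (T :: nat) (t :: nat). 1 \<le> t \<and> t \<le> T - h \<longrightarrow>
        D h (Lpow n \<gamma> L) t =
          (\<Sum>\<pi>\<in>{1..h} \<rightarrow>\<^sub>E {1..(\<Sum>j\<in>{1..n}. \<gamma> j)}.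
             \<Prod>r\<in>{1..(\<Sum>j\<in>{1..n}. \<gamma> j)}. D (h' \<pi> r) (coord L (j' \<pi> r)) (t + t' \<pi> r))) \<and>
     (\<forall>\<pi>\<in>{1..h} \<rightarrow>\<^sub>E {1..(\<Sum>j\<in>{1..n}. \<gamma> j)}. \<forall>r\<in>{1..(\<Sum>j\<in>{1..n}. \<gamma> j)}.
        h' \<pi> r = card {q\<in>{1..h}. \<pi> q = r}) \<and>
     (\<forall>\<pi>\<in>{1..h} \<rightarrow>\<^sub>E {1..(\<Sum>j\<in>{1..n}. \<gamma> j)}.
        (\<Sum>r\<in>{1..(\<Sum>j\<in>{1..n}. \<gamma> j)}. h' \<pi> r) = h) \<and>
     (\<forall>\<pi>\<in>{1..h} \<rightarrow>\<^sub>E {1..(\<Sum>j\<in>{1..n}. \<gamma> j)}. \<forall>r\<in>{1..(\<Sum>j\<in>{1..n}. \<gamma> j)}.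
        t' \<pi> r + h' \<pi> r \<le> h) \<and>
     (\<forall>\<pi>\<in>{1..h} \<rightarrow>\<^sub>E {1..(\<Sum>j\<in>{1..n}. \<gamma> j)}. \<forall>j\<in>{1..n}.
        \<gamma> j = card {r\<in>{1..(\<Sum>j\<in>{1..n}. \<gamma> j)}. j' \<pi> r = j})"
proof -
  define k where "k = (\<Sum>j\<in>{1..n}. \<gamma> j)"
  obtain \<rho> where \<rho>_range: "\<rho> ` {1..k} \<subseteq> {1..n}"
    and \<rho>_fibres: "\<forall>j\<in>{1..n}. card {r\<in>{1..k}. \<rho> r = j} = \<gamma> j"
    using ex_map_with_fibre_cards unfolding k_def by blast
  have "Lpow n \<gamma> L t = (\<Prod>r\<in>{1..k}. coord L (\<rho> r) t)" for L t
    unfolding Lpow_def coord_def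
    by (rule prod_by_fibre_cards[symmetric]) (use \<rho>_range \<rho>_fibres in auto)
  then have Lpow_as_prod: "Lpow n \<gamma> L = (\<lambda>t. \<Prod>r\<in>{1..k}. coord L (\<rho> r) t)" for L
    by (simp add: fun_eq_iff)
  show ?thesis
    unfolding k_def[symmetric] Lpow_as_prod D_prod
  proof (rule exI[of _ "\<lambda>\<pi> r. diff_count \<pi> h r"], rule exI[of _ "\<lambda>\<pi> r. shift_count \<pi> h r"],
      rule exI[of _ "\<lambda>_. \<rho>"], intro conjI ballI allI impI refl)
    show "diff_count \<pi> h r \<le> h" "shift_count \<pi> h r + diff_count \<pi> h r \<le> h" for \<pi> r
      using shift_count_add_diff_count_le[of \<pi> h r] by simp_all
    show "\<rho> r \<in> {1..n}" if "r \<in> {1..k}" for r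
      using \<rho>_range that by blast
    show "diff_count \<pi> h r = card {q\<in>{1..h}. \<pi> q = r}" for \<pi> r
      by (simp add: diff_count_def)
    show "(\<Sum>r\<in>{1..k}. diff_count \<pi> h r) = h" if "\<pi> \<in> {1..h} \<rightarrow>\<^sub>E {1..k}" for \<pi>
      using that by (rule sum_diff_count)
    show "\<gamma> j = card {r\<in>{1..k}. \<rho> r = j}" if "j \<in> {1..n}" for j
      using \<rho>_fibres that by simp
  qed
qed

end
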